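(* Let $m\ge3$, let $X$ be a finite connected $2$-connected graph such that the number $N_e$ of maximal spanning trees not containing $e$ is a constant $N$ independent of the edge $e$, and let $\widetilde{X}$ be its $\mathbb{Z}_m$-homology cover with graph metric $d$. Then $d_Q(x,y)\le d(x,y)$ for all $x,y\in\widetilde{X}$.
   Context: A graph is $2$-connected if removing any single edge leaves it connected. $\mathbb{Z}_m$-homology cover: fix orientations of the edges of $X$; for a maximal spanning tree $T$ with complementary edges $e_1,\dots,e_r$ (a free basis of $\pi_1(X)$), let $\rho:\pi_1(X)\to K=\pi_1(X)/[\pi_1(X),\pi_1(X)]\pi_1(X)^m\cong\oplus^r\mathbb{Z}_m$; $\widetilde{X}$ has vertices $V(X)\times K$, edges $E(X)\times K$, where for $e$ from $v$ to $w$ the edge $(e,k)$ joins $(v,k)$ to $(w,k)$ if $e\in T$ and to $(w,\rho(e)k)$ if $e\notin T$; $\pi:\widetilde{X}\to X$ is the projection. The metric $d_Q$: for $x,y\in\widetilde{X}$ choose a $d$-geodesic $\gamma$ from $x$ to $y$, and for an edge $e$ of $X$ let $\phi(e,x,y)\in\{0,\dots,m-1\}$ be the residue mod $m$ of $\big||\pi^{-1}(e)\cap\gamma|-|\pi^{-1}(e^{-1})\cap\gamma|\big|$ (numbers of traversals of lifts of $e$ in positive, respectively negative, direction); $d_Q(x,y)=\sum_{e\in E(X)}\sum_{T:\,e\notin T}\frac{1}{N_e}\min\{\phi(e,x,y),m-\phi(e,x,y)\}$, the inner sum over maximal spanning trees not containing $e$. *)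

theory Defs
  imports Complex_Main
begin

text \<open>A finite multigraph X with vertex set V, edge set E and a fixed orientation:
  edge e goes from ini e to ter e (loops and multiple edges allowed).\<close>

definition graph :: "'v set \<Rightarrow> 'e set \<Rightarrow> ('e \<Rightarrow> 'v) \<Rightarrow> ('e \<Rightarrow> 'v) \<Rightarrow> bool" where
  "graph V E ini ter \<longleftrightarrow> finite V \<and> finite E \<and> (\<forall>e\<in>E. ini e \<in> V \<and> ter e \<in> V)"

definition adj_rel :: "'e set \<Rightarrow> ('e \<Rightarrow> 'v) \<Rightarrow> ('e \<Rightarrow> 'v) \<Rightarrow> ('v \<times> 'v) set" where
  "adj_rel F ini ter = {(ini e, ter e) | e. e \<in> F} \<union> {(ter e, ini e) | e. e \<in> F}"

definition sg_connected :: "'v set \<Rightarrow> 'e set \<Rightarrow> ('e \<Rightarrow> 'v) \<Rightarrow> ('e \<Rightarrow> 'v) \<Rightarrow> bool" where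
  "sg_connected V F ini ter \<longleftrightarrow> (\<forall>u\<in>V. \<forall>v\<in>V. (u, v) \<in> (adj_rel F ini ter)\<^sup>*)"

text \<open>2-connected in the sense of the paper: removing any single edge leaves it connected.\<close>
definition two_connected :: "'v set \<Rightarrow> 'e set \<Rightarrow> ('e \<Rightarrow> 'v) \<Rightarrow> ('e \<Rightarrow> 'v) \<Rightarrow> bool" where
  "two_connected V E ini ter \<longleftrightarrow> (\<forall>e\<in>E. sg_connected V (E - {e}) ini ter)"

text \<open>Maximal spanning tree: edge set T of a connected spanning subgraph with no
  cycles, i.e. a minimally connected spanning subgraph.\<close>
definition spanning_tree :: "'v set \<Rightarrow> 'e set \<Rightarrow> ('e \<Rightarrow> 'v) \<Rightarrow> ('e \<Rightarrow> 'v) \<Rightarrow> 'e set \<Rightarrow> bool" where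
  "spanning_tree V E ini ter T \<longleftrightarrow> T \<subseteq> E \<and> sg_connected V T ini ter \<and>
     (\<forall>f\<in>T. \<not> sg_connected V (T - {f}) ini ter)"

definition trees_avoiding :: "'v set \<Rightarrow> 'e set \<Rightarrow> ('e \<Rightarrow> 'v) \<Rightarrow> ('e \<Rightarrow> 'v) \<Rightarrow> 'e \<Rightarrow> 'e set set" where
  "trees_avoiding V E ini ter e = {T. spanning_tree V E ini ter T \<and> e \<notin> T}"

definition N_e :: "'v set \<Rightarrow> 'e set \<Rightarrow> ('e \<Rightarrow> 'v) \<Rightarrow> ('e \<Rightarrow> 'v) \<Rightarrow> 'e \<Rightarrow> nat" where
  "N_e V E ini ter e = card (trees_avoiding V E ini ter e)"

text \<open>The group K = (Z_m)^r, with coordinates indexed by the complementary edges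
  e_1..e_r of the spanning tree T (the free basis of pi_1(X)); entries in {0..<m}.\<close>
definition cover_group :: "nat \<Rightarrow> 'e set \<Rightarrow> 'e set \<Rightarrow> ('e \<Rightarrow> nat) set" where
  "cover_group m E T = {k. \<forall>i. (i \<in> E - T \<longrightarrow> k i < m) \<and> (i \<notin> E - T \<longrightarrow> k i = 0)}"

definition rho_act :: "nat \<Rightarrow> 'e set \<Rightarrow> 'e \<Rightarrow> ('e \<Rightarrow> nat) \<Rightarrow> ('e \<Rightarrow> nat)" where
  "rho_act m T e k = (if e \<in> T then k else k(e := (k e + 1) mod m))"

text \<open>Cover edge (e,k) joins (ini e, k) to (ter e, rho(e) k) (rho(e) trivial for e in T).
  A step of a walk is a cover edge with a direction (True = positive direction).\<close>
type_synonym ('e) cstep = "('e \<times> ('e \<Rightarrow> nat)) \<times> bool"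

definition step_start :: "nat \<Rightarrow> 'e set \<Rightarrow> ('e \<Rightarrow> 'v) \<Rightarrow> ('e \<Rightarrow> 'v) \<Rightarrow> 'e cstep \<Rightarrow> 'v \<times> ('e \<Rightarrow> nat)" where
  "step_start m T ini ter s = (case s of ((e, k), b) \<Rightarrow>
     if b then (ini e, k) else (ter e, rho_act m T e k))"

definition step_end :: "nat \<Rightarrow> 'e set \<Rightarrow> ('e \<Rightarrow> 'v) \<Rightarrow> ('e \<Rightarrow> 'v) \<Rightarrow> 'e cstep \<Rightarrow> 'v \<times> ('e \<Rightarrow> nat)" where
  "step_end m T ini ter s = (case s of ((e, k), b) \<Rightarrow>
     if b then (ter e, rho_act m T e k) else (ini e, k))"

fun cwalk :: "nat \<Rightarrow> 'e set \<Rightarrow> 'e set \<Rightarrow> ('e \<Rightarrow> 'v) \<Rightarrow> ('e \<Rightarrow> 'v) \<Rightarrow>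
    'v \<times> ('e \<Rightarrow> nat) \<Rightarrow> 'e cstep list \<Rightarrow> 'v \<times> ('e \<Rightarrow> nat) \<Rightarrow> bool" where
  "cwalk m E T ini ter x [] y \<longleftrightarrow> x = y"
| "cwalk m E T ini ter x (s # ss) y \<longleftrightarrow>
     fst s \<in> E \<times> cover_group m E T \<and> step_start m T ini ter s = x \<and>
     cwalk m E T ini ter (step_end m T ini ter s) ss y"

definition cover_dist :: "nat \<Rightarrow> 'e set \<Rightarrow> 'e set \<Rightarrow> ('e \<Rightarrow> 'v) \<Rightarrow> ('e \<Rightarrow> 'v) \<Rightarrow>
    'v \<times> ('e \<Rightarrow> nat) \<Rightarrow> 'v \<times> ('e \<Rightarrow> nat) \<Rightarrow> nat" where
  "cover_dist m E T ini ter x y = (LEAST n. \<exists>\<gamma>. cwalk m E T ini ter x \<gamma> y \<and> length \<gamma> = n)"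

definition geodesic :: "nat \<Rightarrow> 'e set \<Rightarrow> 'e set \<Rightarrow> ('e \<Rightarrow> 'v) \<Rightarrow> ('e \<Rightarrow> 'v) \<Rightarrow>
    'v \<times> ('e \<Rightarrow> nat) \<Rightarrow> 'e cstep list \<Rightarrow> 'v \<times> ('e \<Rightarrow> nat) \<Rightarrow> bool" where
  "geodesic m E T ini ter x \<gamma> y \<longleftrightarrow>
     cwalk m E T ini ter x \<gamma> y \<and> length \<gamma> = cover_dist m E T ini ter x y"

definition pos_count :: "'e \<Rightarrow> 'e cstep list \<Rightarrow> nat" where
  "pos_count e \<gamma> = length (filter (\<lambda>s. fst (fst s) = e \<and> snd s) \<gamma>)"

definition neg_count :: "'e \<Rightarrow> 'e cstep list \<Rightarrow> nat" where
  "neg_count e \<gamma> = length (filter (\<lambda>s. fst (fst s) = e \<and> \<not> snd s) \<gamma>)"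

definition phi :: "nat \<Rightarrow> 'e \<Rightarrow> 'e cstep list \<Rightarrow> nat" where
  "phi m e \<gamma> = nat \<bar>int (pos_count e \<gamma>) - int (neg_count e \<gamma>)\<bar> mod m"

text \<open>d_Q computed from the chosen geodesic gamma.\<close>
definition dQ :: "nat \<Rightarrow> 'v set \<Rightarrow> 'e set \<Rightarrow> ('e \<Rightarrow> 'v) \<Rightarrow> ('e \<Rightarrow> 'v) \<Rightarrow> 'e cstep list \<Rightarrow> real" where
  "dQ m V E ini ter \<gamma> = (\<Sum>e\<in>E. \<Sum>T'\<in>trees_avoiding V E ini ter e.
      (1 / real (N_e V E ini ter e)) * real (min (phi m e \<gamma>) (m - phi m e \<gamma>)))"

end

theory Submission
  imports Defs
begin

text \<open>The inner sum of \<open>d\<^sub>Q\<close> has \<open>N\<^sub>e\<close> equal terms weighted by \<open>1/N\<^sub>e\<close>, so edge \<open>e\<close>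
  contributes \<open>min \<phi> (m - \<phi>) \<le> \<bar>#positive - #negative traversals\<bar>\<close>, which is at most the
  number of steps of \<open>\<gamma>\<close> lying over \<open>e\<close>. Summing over the edges counts every step of the
  geodesic at most once, giving \<open>d\<^sub>Q \<le> length \<gamma> = d\<close>.\<close>

lemma sum_length_filter_eq_le:
  assumes "finite A"
  shows "(\<Sum>a\<in>A. length (filter (\<lambda>x. f x = a) xs)) \<le> length xs"
proof (induction xs)
  case Nil
  then show ?case by simp
next
  case (Cons x xs)
  have "(\<Sum>a\<in>A. length (filter (\<lambda>y. f y = a) (x # xs)))
      = (\<Sum>a\<in>A. length (filter (\<lambda>y. f y = a) xs)) + (\<Sum>a\<in>A. if a = f x then 1 else 0)"
    unfolding sum.distrib[symmetric] by (rule sum.cong) auto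
  also have "(\<Sum>a\<in>A. if a = f x then 1 else 0 :: nat) \<le> 1"
    using assms by (simp add: sum.delta)
  finally show ?case
    using Cons.IH by simp
qed

lemma pos_count_plus_neg_count:
  "pos_count e \<gamma> + neg_count e \<gamma> = length (filter (\<lambda>s. fst (fst s) = e) \<gamma>)"
  unfolding pos_count_def neg_count_def
  using sum_length_filter_compl[of snd "filter (\<lambda>s. fst (fst s) = e) \<gamma>"]
  by (simp add: conj_commute)

lemma sum_traversals_le_length:
  "finite E \<Longrightarrow> (\<Sum>e\<in>E. pos_count e \<gamma> + neg_count e \<gamma>) \<le> length \<gamma>"
  unfolding pos_count_plus_neg_count by (rule sum_length_filter_eq_le)

lemma min_phi_le_traversals:
  "min (phi m e \<gamma>) (m - phi m e \<gamma>) \<le> pos_count e \<gamma> + neg_count e \<gamma>"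
proof -
  have "phi m e \<gamma> \<le> nat \<bar>int (pos_count e \<gamma>) - int (neg_count e \<gamma>)\<bar>"
    unfolding phi_def by simp
  also have "\<dots> \<le> pos_count e \<gamma> + neg_count e \<gamma>"
    by linarith
  finally show ?thesis
    by simp
qed

lemma sum_card_average_le:
  fixes c :: real
  assumes "finite A" and "c \<ge> 0"
  shows "(\<Sum>a\<in>A. 1 / real (card A) * c) \<le> c"
  using assms by (cases "A = {}") simp_all

lemma finite_trees_avoiding:
  "finite E \<Longrightarrow> finite (trees_avoiding V E ini ter e)"
  by (rule finite_subset[of _ "Pow E"]) (auto simp: trees_avoiding_def spanning_tree_def)

lemma dQ_le_length:
  assumes "finite E"
  shows "dQ m V E ini ter \<gamma> \<le> real (length \<gamma>)"
proof -
  have "dQ m V E ini ter \<gamma> \<le> (\<Sum>e\<in>E. real (min (phi m e \<gamma>) (m - phi m e \<gamma>)))"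
    unfolding dQ_def N_e_def
    using finite_trees_avoiding[OF assms]
    by (intro sum_mono sum_card_average_le) simp_all
  also have "\<dots> \<le> (\<Sum>e\<in>E. real (pos_count e \<gamma> + neg_count e \<gamma>))"
    by (intro sum_mono of_nat_mono min_phi_le_traversals)
  also have "\<dots> \<le> real (length \<gamma>)"
    using sum_traversals_le_length[OF assms, of \<gamma>] by (simp only: of_nat_sum[symmetric] of_nat_le_iff)
  finally show ?thesis .
qed

theorem mainTheorem4:
  fixes V :: "'v set" and E :: "'e set" and ini ter :: "'e \<Rightarrow> 'v"
    and m N :: nat and T :: "'e set"
    and x y :: "'v \<times> ('e \<Rightarrow> nat)" and \<gamma> :: "'e cstep list"
  assumes "m \<ge> 3"
    and "graph V E ini ter" and "V \<noteq> {}"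
    and "sg_connected V E ini ter"
    and "two_connected V E ini ter"
    and "\<forall>e\<in>E. N_e V E ini ter e = N"
    and "spanning_tree V E ini ter T"
    and "x \<in> V \<times> cover_group m E T" and "y \<in> V \<times> cover_group m E T"
    and "geodesic m E T ini ter x \<gamma> y"
  shows "dQ m V E ini ter \<gamma> \<le> real (cover_dist m E T ini ter x y)"
proof -
  have "finite E"
    using \<open>graph V E ini ter\<close> by (simp add: graph_def)
  then have "dQ m V E ini ter \<gamma> \<le> real (length \<gamma>)"
    by (rule dQ_le_length)
  also have "length \<gamma> = cover_dist m E T ini ter x y"
    using \<open>geodesic m E T ini ter x \<gamma> y\<close> by (simp add: geodesic_def)
  finally show ?thesis .
qed

end
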